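(* Let $G$ and $G'$ be deterministic finite automata over the alphabet $\Sigma$, let $\Sigma_o\subseteq\Sigma$, and let $H:=T_{\Sigma_o}(G)$ and $H':=T_{\Sigma_o}(G')$. If $G'\sqsubseteq G$, then $H'\,\tilde{\sqsubseteq}\,H$.
   Context: A DFA $G=(Q,\Sigma,\delta_G,q_0,Q_m)$ has finite state set $Q$, alphabet $\Sigma$, partial transition function $\delta_G$ (extended to strings), initial state $q_0$, marked states $Q_m$; $L(G)$ is the set of strings $s$ with $\delta_G(q_0,s)$ defined. $P_{\Sigma_o}$ is the natural projection $\Sigma^*\to\Sigma_o^*$ erasing events outside $\Sigma_o$. The $\epsilon$-reach of $q$ is $\epsilon R_G(q)=\{\delta_G(q,s): s\in\Sigma^*, P_{\Sigma_o}(s)=\epsilon, \delta_G(q,s)\text{ defined}\}$. The observer $T_{\Sigma_o}(G)$ is the DFA over $\Sigma_o$ whose states are subsets of $Q$, with initial state $\epsilon R_G(q_0)$ and transition function $\delta_H(B,\sigma)=\bigcup_{q\in B,\ \delta_G(q,\sigma)\text{ defined}}\epsilon R_G(\delta_G(q,\sigma))$ (defined iff this union is nonempty), restricted to its states reachable from the initial state; a state $B$ is marked iff $B\subseteq Q_m$. $G'$ is a subautomaton of $G$, $G'\sqsubseteq G$, if $\delta_{G'}(q'_0,s)=\delta_G(q_0,s)$ for all $s\in L(G')$ (with $q'_0$ the initial state of $G'$). For automata whose states are sets, $H'$ is a subobserver of $H$, $H'\,\tilde{\sqsubseteq}\,H$, if $\delta_{H'}(h'_0,s)\subseteq\delta_H(h_0,s)$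 for all $s\in L(H')$, where $h_0,h'_0$ are the respective initial states. *)

theory Defs
  imports Main
begin

record ('q, 'e) dfa =
  states :: "'q set"
  alph   :: "'e set"
  trans  :: "'q \<Rightarrow> 'e \<Rightarrow> 'q option"
  init   :: 'q
  marked :: "'q set"

definition is_dfa :: "('q, 'e) dfa \<Rightarrow> 'e set \<Rightarrow> bool" where
  "is_dfa G \<Sigma> \<longleftrightarrow> finite (states G) \<and> finite \<Sigma> \<and> alph G = \<Sigma> \<and>
     init G \<in> states G \<and> marked G \<subseteq> states G \<and>
     (\<forall>q e q'. trans G q e = Some q' \<longrightarrow> q \<in> states G \<and> e \<in> \<Sigma> \<and> q' \<in> states G)"

fun ext :: "('q \<Rightarrow> 'e \<Rightarrow> 'q option) \<Rightarrow> 'q \<Rightarrow> 'e list \<Rightarrow> 'q option" where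
  "ext d q [] = Some q"
| "ext d q (e # s) = (case d q e of None \<Rightarrow> None | Some q' \<Rightarrow> ext d q' s)"

abbreviation delta :: "('q, 'e) dfa \<Rightarrow> 'q \<Rightarrow> 'e list \<Rightarrow> 'q option" where
  "delta G \<equiv> ext (trans G)"

definition lang :: "('q, 'e) dfa \<Rightarrow> 'e list set" where
  "lang G = {s. s \<in> lists (alph G) \<and> delta G (init G) s \<noteq> None}"

definition proj :: "'e set \<Rightarrow> 'e list \<Rightarrow> 'e list" where
  "proj \<Sigma>o s = filter (\<lambda>e. e \<in> \<Sigma>o) s"

definition eps_reach :: "('q, 'e) dfa \<Rightarrow> 'e set \<Rightarrow> 'q \<Rightarrow> 'q set" where
  "eps_reach G \<Sigma>o q = {q'. \<exists>s \<in> lists (alph G). proj \<Sigma>o s = [] \<and> delta G q s = Some q'}"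

definition obs_step :: "('q, 'e) dfa \<Rightarrow> 'e set \<Rightarrow> 'q set \<Rightarrow> 'e \<Rightarrow> 'q set" where
  "obs_step G \<Sigma>o B \<sigma> = \<Union> {eps_reach G \<Sigma>o q' | q q'. q \<in> B \<and> trans G q \<sigma> = Some q'}"

definition obs_trans_raw :: "('q, 'e) dfa \<Rightarrow> 'e set \<Rightarrow> 'q set \<Rightarrow> 'e \<Rightarrow> 'q set option" where
  "obs_trans_raw G \<Sigma>o B \<sigma> =
     (if \<sigma> \<in> \<Sigma>o \<and> obs_step G \<Sigma>o B \<sigma> \<noteq> {} then Some (obs_step G \<Sigma>o B \<sigma>) else None)"

definition obs_reach :: "('q, 'e) dfa \<Rightarrow> 'e set \<Rightarrow> 'q set set" where
  "obs_reach G \<Sigma>o = {B. \<exists>s \<in> lists \<Sigma>o.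
      ext (obs_trans_raw G \<Sigma>o) (eps_reach G \<Sigma>o (init G)) s = Some B}"

definition observer :: "'e set \<Rightarrow> ('q, 'e) dfa \<Rightarrow> ('q set, 'e) dfa" where
  "observer \<Sigma>o G =
    \<lparr> states = obs_reach G \<Sigma>o,
      alph = \<Sigma>o,
      trans = (\<lambda>B \<sigma>. if B \<in> obs_reach G \<Sigma>o then obs_trans_raw G \<Sigma>o B \<sigma> else None),
      init = eps_reach G \<Sigma>o (init G),
      marked = {B \<in> obs_reach G \<Sigma>o. B \<subseteq> marked G} \<rparr>"

definition subautomaton :: "('q, 'e) dfa \<Rightarrow> ('q, 'e) dfa \<Rightarrow> bool" where
  "subautomaton G' G \<longleftrightarrow> (\<forall>s \<in> lang G'. delta G' (init G') s = delta G (init G) s)"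

definition subobserver :: "('q set, 'e) dfa \<Rightarrow> ('q set, 'e) dfa \<Rightarrow> bool" where
  "subobserver H' H \<longleftrightarrow> (\<forall>s \<in> lang H'. \<exists>B' B.
      delta H' (init H') s = Some B' \<and> delta H (init H) s = Some B \<and> B' \<subseteq> B)"

end

theory Submission
  imports Defs
begin

text \<open>The state of \<open>T\<^sub>\<Sigma>\<^sub>o(G)\<close> reached by an observation \<open>t\<close> is the set of states of
\<open>G\<close> reached from the initial state by strings whose projection is \<open>t\<close> (and the observer is
stuck exactly when that set is empty). Every such string of \<open>G'\<close> lies in \<open>L(G')\<close>, so
\<open>G' \<sqsubseteq> G\<close> sends it to the same state of \<open>G\<close>; hence the observer states of \<open>G'\<close> are
contained in those of \<open>G\<close>.\<close>

lemma ext_append: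
  "ext d q (u @ v) = (case ext d q u of None \<Rightarrow> None | Some q' \<Rightarrow> ext d q' v)"
  by (induction u arbitrary: q) (auto split: option.splits)

definition trans_within_alph :: "('q, 'e) dfa \<Rightarrow> bool" where
  "trans_within_alph G \<longleftrightarrow> (\<forall>q \<sigma> q'. trans G q \<sigma> = Some q' \<longrightarrow> \<sigma> \<in> alph G)"

lemma trans_within_alph_dfa: "is_dfa G \<Sigma> \<Longrightarrow> trans_within_alph G"
  unfolding is_dfa_def trans_within_alph_def by blast

definition succ_set :: "('q, 'e) dfa \<Rightarrow> 'q set \<Rightarrow> 'e \<Rightarrow> 'q set" where
  "succ_set G A \<sigma> = {q'. \<exists>q\<in>A. trans G q \<sigma> = Some q'}"

definition proj_reach :: "('q, 'e) dfa \<Rightarrow> 'e set \<Rightarrow> 'q set \<Rightarrow> 'e list \<Rightarrow> 'q set" where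
  "proj_reach G \<Sigma>o B t =
     {q. \<exists>p\<in>B. \<exists>u\<in>lists (alph G). proj \<Sigma>o u = t \<and> delta G p u = Some q}"

lemma proj_reach_empty [simp]: "proj_reach G \<Sigma>o {} t = {}"
  unfolding proj_reach_def by simp

lemma subset_proj_reach_Nil: "B \<subseteq> proj_reach G \<Sigma>o B []"
  unfolding proj_reach_def by (auto intro!: bexI[of _ "[]"] simp: proj_def)

lemma proj_reach_Nil_eq_empty_iff: "proj_reach G \<Sigma>o B [] = {} \<longleftrightarrow> B = {}"
  using subset_proj_reach_Nil[of B G \<Sigma>o] by auto

lemma obs_step_eq_proj_reach:
  "obs_step G \<Sigma>o A \<sigma> = proj_reach G \<Sigma>o (succ_set G A \<sigma>) []"
  unfolding obs_step_def succ_set_def proj_reach_def eps_reach_def by blast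

lemma proj_reach_Cons_unobservable:
  "\<sigma> \<notin> \<Sigma>o \<Longrightarrow> proj_reach G \<Sigma>o B (\<sigma> # t) = {}"
  unfolding proj_reach_def proj_def by (auto simp: filter_eq_Cons_iff)

lemma proj_reach_Cons:
  assumes "trans_within_alph G" and "\<sigma> \<in> \<Sigma>o"
  shows "proj_reach G \<Sigma>o B (\<sigma> # t) = proj_reach G \<Sigma>o (succ_set G (proj_reach G \<Sigma>o B []) \<sigma>) t"
    (is "?lhs = ?rhs")
proof
  show "?lhs \<subseteq> ?rhs"
  proof
    fix x assume "x \<in> ?lhs"
    then obtain p w where p: "p \<in> B" and w: "w \<in> lists (alph G)" "proj \<Sigma>o w = \<sigma> # t"
        "delta G p w = Some x"
      unfolding proj_reach_def by blast
    then obtain u v where uv: "w = u @ \<sigma> # v" "proj \<Sigma>o u = []" "proj \<Sigma>o v = t"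
      unfolding proj_def by (auto simp: filter_eq_Cons_iff)
    from w(3) uv(1) obtain q q' where q: "delta G p u = Some q" "trans G q \<sigma> = Some q'"
        and v: "delta G q' v = Some x"
      by (auto simp: ext_append split: option.splits)
    have "q \<in> proj_reach G \<Sigma>o B []"
      using p w(1) uv q(1) unfolding proj_reach_def by auto
    with q(2) have "q' \<in> succ_set G (proj_reach G \<Sigma>o B []) \<sigma>"
      unfolding succ_set_def by blast
    with w(1) uv v show "x \<in> ?rhs"
      unfolding proj_reach_def by auto
  qed
next
  show "?rhs \<subseteq> ?lhs"
  proof
    fix x assume "x \<in> ?rhs"
    then obtain q q' v where q': "q \<in> proj_reach G \<Sigma>o B []" "trans G q \<sigma> = Some q'"
        and v: "v \<in> lists (alph G)" "proj \<Sigma>o v = t" "delta G q' v = Some x"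
      unfolding proj_reach_def succ_set_def by blast
    from q'(1) obtain p u where p: "p \<in> B" and u: "u \<in> lists (alph G)" "proj \<Sigma>o u = []"
        "delta G p u = Some q"
      unfolding proj_reach_def by blast
    have "\<sigma> \<in> alph G"
      using assms(1) q'(2) unfolding trans_within_alph_def by blast
    with assms(2) p u v q'(2) show "x \<in> ?lhs"
      unfolding proj_reach_def
      by (intro CollectI bexI[OF _ p] bexI[of _ "u @ \<sigma> # v"]) (auto simp: ext_append proj_def)
  qed
qed

lemma ext_obs_trans_raw_proj_reach:
  assumes "trans_within_alph G" and "B \<noteq> {}"
  shows "ext (obs_trans_raw G \<Sigma>o) (proj_reach G \<Sigma>o B []) t =
           (if proj_reach G \<Sigma>o B t = {} then None else Some (proj_reach G \<Sigma>o B t))"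
  using assms(2)
proof (induction t arbitrary: B)
  case Nil
  then show ?case by (simp add: proj_reach_Nil_eq_empty_iff)
next
  case (Cons \<sigma> t)
  show ?case
  proof (cases "\<sigma> \<in> \<Sigma>o")
    case False
    then show ?thesis by (simp add: obs_trans_raw_def proj_reach_Cons_unobservable)
  next
    case True
    define B' where "B' = succ_set G (proj_reach G \<Sigma>o B []) \<sigma>"
    have step: "obs_step G \<Sigma>o (proj_reach G \<Sigma>o B []) \<sigma> = proj_reach G \<Sigma>o B' []"
      unfolding B'_def by (rule obs_step_eq_proj_reach)
    have cons: "proj_reach G \<Sigma>o B (\<sigma> # t) = proj_reach G \<Sigma>o B' t"
      unfolding B'_def using assms(1) True by (rule proj_reach_Cons)
    show ?thesis
    proof (cases "B' = {}")
      case True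
      then show ?thesis using step cons by (simp add: obs_trans_raw_def)
    next
      case False
      then show ?thesis
        using step cons Cons.IH[OF False] \<open>\<sigma> \<in> \<Sigma>o\<close>
        by (simp add: obs_trans_raw_def proj_reach_Nil_eq_empty_iff)
    qed
  qed
qed

lemma obs_reach_obs_trans_raw:
  assumes "B \<in> obs_reach G \<Sigma>o" and "obs_trans_raw G \<Sigma>o B \<sigma> = Some C"
  shows "C \<in> obs_reach G \<Sigma>o"
proof -
  obtain s where "s \<in> lists \<Sigma>o" and "ext (obs_trans_raw G \<Sigma>o) (eps_reach G \<Sigma>o (init G)) s = Some B"
    using assms(1) unfolding obs_reach_def by blast
  moreover have "\<sigma> \<in> \<Sigma>o"
    using assms(2) unfolding obs_trans_raw_def by (simp split: if_splits)
  ultimately show ?thesis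
    using assms(2) unfolding obs_reach_def
    by (intro CollectI bexI[of _ "s @ [\<sigma>]"]) (auto simp: ext_append)
qed

lemma delta_observer:
  "B \<in> obs_reach G \<Sigma>o \<Longrightarrow> delta (observer \<Sigma>o G) B t = ext (obs_trans_raw G \<Sigma>o) B t"
proof (induction t arbitrary: B)
  case Nil
  then show ?case by simp
next
  case (Cons \<sigma> t)
  then show ?case
    using obs_reach_obs_trans_raw[OF Cons.prems]
    by (auto simp: observer_def split: option.splits)
qed

lemma delta_observer_init:
  assumes "trans_within_alph G"
  shows "delta (observer \<Sigma>o G) (init (observer \<Sigma>o G)) t =
           (if proj_reach G \<Sigma>o {init G} t = {} then None else Some (proj_reach G \<Sigma>o {init G} t))"
proof -
  have init_eq: "eps_reach G \<Sigma>o (init G) = proj_reach G \<Sigma>o {init G} []"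
    unfolding proj_reach_def eps_reach_def by auto
  have "eps_reach G \<Sigma>o (init G) \<in> obs_reach G \<Sigma>o"
    unfolding obs_reach_def by (intro CollectI bexI[of _ "[]"]) auto
  moreover have "init (observer \<Sigma>o G) = eps_reach G \<Sigma>o (init G)"
    by (simp add: observer_def)
  ultimately have "delta (observer \<Sigma>o G) (init (observer \<Sigma>o G)) t =
                     ext (obs_trans_raw G \<Sigma>o) (proj_reach G \<Sigma>o {init G} []) t"
    by (simp add: delta_observer init_eq)
  with ext_obs_trans_raw_proj_reach[OF assms, of "{init G}" \<Sigma>o t] show ?thesis
    by simp
qed

lemma proj_reach_subautomaton:
  assumes "subautomaton G' G" and "alph G' \<subseteq> alph G"
  shows "proj_reach G' \<Sigma>o {init G'} t \<subseteq> proj_reach G \<Sigma>o {init G} t"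
proof
  fix x assume "x \<in> proj_reach G' \<Sigma>o {init G'} t"
  then obtain u where u: "u \<in> lists (alph G')" "proj \<Sigma>o u = t" "delta G' (init G') u = Some x"
    unfolding proj_reach_def by blast
  then have "u \<in> lang G'"
    unfolding lang_def by simp
  with assms(1) u(3) have "delta G (init G) u = Some x"
    unfolding subautomaton_def by simp
  with assms(2) u(1,2) show "x \<in> proj_reach G \<Sigma>o {init G} t"
    unfolding proj_reach_def by auto
qed

lemma subobserver_observer:
  assumes "trans_within_alph G" and "trans_within_alph G'" and "alph G' \<subseteq> alph G"
    and "subautomaton G' G"
  shows "subobserver (observer \<Sigma>o G') (observer \<Sigma>o G)"
  unfolding subobserver_def lang_def
  using delta_observer_init[OF assms(1)] delta_observer_init[OF assms(2)]
    proj_reach_subautomaton[OF assms(4,3)]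
  by (fastforce split: if_splits)

theorem theorem1:
  fixes G G' :: "('q, 'e) dfa" and \<Sigma> \<Sigma>o :: "'e set"
  assumes "is_dfa G \<Sigma>" and "is_dfa G' \<Sigma>" and "\<Sigma>o \<subseteq> \<Sigma>"
    and "subautomaton G' G"
  shows "subobserver (observer \<Sigma>o G') (observer \<Sigma>o G)"
proof (rule subobserver_observer)
  show "trans_within_alph G" "trans_within_alph G'"
    using assms(1,2) by (auto intro: trans_within_alph_dfa)
  show "alph G' \<subseteq> alph G"
    using assms(1,2) unfolding is_dfa_def by simp
qed (rule assms(4))

end
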